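(* Let $(a_n)_{n\ge0}$ be the sequence defined by \[ \sum_{n=0}^{\infty}a_nz^n=\frac{1+36z+\sqrt{(1-12z)^3}}{2(1+4z)^2} \] (OEIS A220910). Then for every $n\ge0$, \[ a_n=\frac{1-8n}{2}(-4)^n+\binom{2n}{n}\sum_{k=0}^{n}\frac{3^{n+1}(k+1)\prod_{i=0}^{k-1}(n-i)}{8(-3)^k\prod_{i=0}^{k+1}(n-i-1/2)} \] and \[ a_n=\frac{(-4)^n(1-8n)}{16}\left[8-\sum_{k=0}^{n+1}\frac{(-3)^k}{k!}\prod_{i=0}^{k-1}(i-3/2)\right]+\binom{2n}{n}\frac{3^{n+3}}{32(n+1)}. \]
   Context: The square root is the branch analytic near $z=0$ with value $1$ at $z=0$. Empty products equal $1$. *)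

theory Defs
  imports "HOL-Analysis.Analysis"
begin

text \<open>Generating function of OEIS A220910. The square root is the principal
branch csqrt, which near z = 0 (where (1-12z)^3 is near 1) is the branch
analytic near 0 with value 1 at 0.\<close>
definition A220910_gf :: "complex \<Rightarrow> complex" where
  "A220910_gf z = (1 + 36 * z + csqrt ((1 - 12 * z) ^ 3)) / (2 * (1 + 4 * z) ^ 2)"

definition A220910 :: "nat \<Rightarrow> complex" where
  "A220910 n = (deriv ^^ n) A220910_gf 0 / of_nat (fact n)"

end

theory Submission
  imports Defs "HOL-Complex_Analysis.Complex_Analysis"
begin

text \<open>Near \<open>0\<close> the square root in the generating function is \<open>(1 - 12 z) powr (3/2)\<close>,
  whose coefficients are \<open>c j * (-4) ^ j\<close> with \<open>c j = (3/2 gchoose j) * 3 ^ j\<close>; multiplying by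
  \<open>(1 + 4 z) ^ -2 = \<Sum> (n + 1) (-4 z) ^ n\<close> gives
  \<open>a n = (-4) ^ n / 2 * (1 - 8 n + \<Sum>j\<le>n. (n + 1 - j) * c j)\<close>.
  Both closed forms are rewritings of this weighted sum. From
  \<open>(-4) ^ n * (3/2 gchoose n) = 3 * binom(2n, n) / (4 (n - 1/2) (n - 3/2))\<close> and the ratio
  \<open>c (j + 1) / c j = 3 (3/2 - j) / (j + 1)\<close>, the \<open>k\<close>-th summand of the first formula is
  \<open>(-4) ^ n / 2 * (k + 1) * c (n - k)\<close>. For the second, the same ratio telescopes the weighted
  sum to \<open>(8 n - 1) / 8 * (\<Sum>j\<le>n. c j) + (n + 1) * c (n + 1) / 4\<close>, and \<open>c (n + 1)\<close> is again a
  rational multiple of \<open>binom(2n, n)\<close>.\<close>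

lemma gbinomial_Suc_lower:
  fixes a :: "'a :: field_char_0"
  shows "a gchoose Suc k = (a gchoose k) * (a - of_nat k) / of_nat (Suc k)"
proof -
  have "fact (Suc k) * (a gchoose Suc k) = (\<Prod>i = 0..<Suc k. a - of_nat i)"
    by (rule gbinomial_mult_fact)
  also have "\<dots> = (\<Prod>i = 0..<k. a - of_nat i) * (a - of_nat k)"
    by simp
  also have "(\<Prod>i = 0..<k. a - of_nat i) = fact k * (a gchoose k)"
    by (rule gbinomial_mult_fact [symmetric])
  finally have "fact k * (of_nat (Suc k) * (a gchoose Suc k)) = fact k * ((a gchoose k) * (a - of_nat k))"
    by (simp only: fact_Suc of_nat_mult mult_ac)
  then have "of_nat (Suc k) * (a gchoose Suc k) = (a gchoose k) * (a - of_nat k)"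
    by simp
  then show ?thesis
    by (simp add: eq_divide_eq mult.commute del: of_nat_Suc)
qed

lemma Suc_times_central_binomial_Suc:
  "Suc n * (2 * Suc n choose Suc n) = 2 * (2 * n + 1) * (2 * n choose n)"
proof -
  have "Suc n * (2 * Suc n choose Suc n) = 2 * Suc n * (Suc (2 * n) choose n)"
    using Suc_times_binomial[of n "Suc (2 * n)"] by (simp del: binomial_Suc_Suc)
  also have "Suc (2 * n) choose n = Suc (2 * n) choose Suc n"
    using Suc_times_binomial_add[of n n] by (simp only: mult_2 mult_cancel1) simp
  also have "2 * Suc n * (Suc (2 * n) choose Suc n) = 2 * (Suc n * (Suc (2 * n) choose Suc n))"
    by (simp only: mult.assoc)
  also have "Suc n * (Suc (2 * n) choose Suc n) = (2 * n + 1) * (2 * n choose n)"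
    using Suc_times_binomial[of n "2 * n"] by (simp del: binomial_Suc_Suc)
  finally show ?thesis
    by (simp only: mult.assoc)
qed

lemma central_binomial_Suc:
  "real (2 * Suc n choose Suc n) = real (2 * n choose n) * (2 * (2 * real n + 1)) / (real n + 1)"
proof -
  have "real (Suc n * (2 * Suc n choose Suc n)) = real (2 * (2 * n + 1) * (2 * n choose n))"
    by (simp only: Suc_times_central_binomial_Suc)
  then show ?thesis
    by (simp add: field_simps del: binomial_Suc_Suc)
qed

lemma of_nat_minus_half_neq_0: "real m - real i - 1 / 2 \<noteq> 0"
proof
  assume "real m - real i - 1 / 2 = 0"
  then have "real (2 * m) = real (2 * i + 1)"
    by simp
  then have "2 * m = 2 * i + 1"
    by (simp only: of_nat_eq_iff)
  then show False
    by presburger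
qed

lemma of_nat_minus_halves_neq_0: "real n - 1/2 \<noteq> 0" "real n - 3/2 \<noteq> 0"
  using of_nat_minus_half_neq_0 [of n 0] of_nat_minus_half_neq_0 [of n 1] by simp_all

lemma gchoose_three_halves:
  "(-4) ^ n * ((3/2::real) gchoose n) = real (2 * n choose n) * 3 / (4 * (real n - 1/2) * (real n - 3/2))"
proof (induction n)
  case 0
  then show ?case by simp
next
  case (Suc n)
  have "(-4) ^ Suc n * ((3/2::real) gchoose Suc n)
        = ((-4) ^ n * ((3/2) gchoose n)) * (-4 * (3/2 - real n) / (real n + 1))"
    by (simp add: gbinomial_Suc_lower field_simps)
  also have "\<dots> = real (2 * n choose n) * 3 / (4 * (real n - 1/2) * (real n - 3/2))
                   * (-4 * (3/2 - real n) / (real n + 1))"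
    by (simp only: Suc.IH)
  also have "\<dots> = real (2 * Suc n choose Suc n) * 3 / (4 * (real (Suc n) - 1/2) * (real (Suc n) - 3/2))"
    unfolding central_binomial_Suc using of_nat_minus_halves_neq_0 [of n]
    by (simp add: divide_simps) (simp add: algebra_simps)
  finally show ?case .
qed

text \<open>The Taylor coefficients of \<open>(1 - 12 z) powr (3/2)\<close> are \<open>radical_coeff j * (-4) ^ j\<close>.\<close>
definition radical_coeff :: "nat \<Rightarrow> real" where
  "radical_coeff j = ((3/2) gchoose j) * 3 ^ j"

lemma radical_coeff_Suc:
  "radical_coeff (Suc m) = radical_coeff m * 3 * (3/2 - real m) / real (Suc m)"
  by (simp add: radical_coeff_def gbinomial_Suc_lower del: of_nat_Suc)

lemma radical_coeff_altdef:
  "radical_coeff k = (-3) ^ k / fact k * (\<Prod>i = 0..<k. real i - 3 / 2)"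
proof -
  have "(-3) ^ k * (\<Prod>i = 0..<k. real i - 3 / 2) = (\<Prod>i = 0..<k. -3 * (real i - 3 / 2))"
    by (simp only: prod.distrib prod_constant card_atLeastLessThan diff_zero)
  also have "\<dots> = (\<Prod>i = 0..<k. 3 * (3 / 2 - real i))"
    by (rule prod.cong) simp_all
  also have "\<dots> = 3 ^ k * (\<Prod>i = 0..<k. 3 / 2 - real i)"
    by (simp only: prod.distrib prod_constant card_atLeastLessThan diff_zero)
  finally show ?thesis
    by (simp add: radical_coeff_def gbinomial_prod_rev)
qed

lemma central_binomial_quotient_eq_radical_coeff:
  assumes "k \<le> n"
  shows "real (2 * n choose n) * (3 ^ (n + 1) * (\<Prod>i = 0..<k. real n - real i)
           / (8 * (-3) ^ k * (\<Prod>i = 0..k + 1. real n - real i - 1 / 2)))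
         = (-4) ^ n / 2 * radical_coeff (n - k)"
  using assms
proof (induction k)
  case 0
  have two_factors: "(\<Prod>i = 0..0 + 1. real n - real i - 1 / 2) = (real n - 1/2) * (real n - 3/2)"
    by (simp add: algebra_simps)
  have "(-4) ^ n / 2 * radical_coeff n = 3 ^ n / 2 * ((-4) ^ n * ((3/2) gchoose n))"
    by (simp add: radical_coeff_def)
  also have "\<dots> = 3 ^ n / 2 * (real (2 * n choose n) * 3 / (4 * (real n - 1/2) * (real n - 3/2)))"
    by (simp only: gchoose_three_halves)
  also have "\<dots> = real (2 * n choose n) * (3 ^ (n + 1) / (8 * ((real n - 1/2) * (real n - 3/2))))"
    using of_nat_minus_halves_neq_0 [of n] by (simp add: divide_simps)
  finally show ?case
    unfolding two_factors by simp
next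
  case (Suc k)
  define m where "m = n - Suc k"
  have n_minus_k: "n - k = Suc m" and "real n - real k = real m + 1"
    using Suc.prems by (simp_all add: m_def of_nat_diff)
  have IH: "real (2 * n choose n) * (3 ^ (n + 1) * (\<Prod>i = 0..<k. real n - real i)
              / (8 * (-3) ^ k * (\<Prod>i = 0..k + 1. real n - real i - 1 / 2)))
            = (-4) ^ n / 2 * (radical_coeff m * 3 * (3/2 - real m) / real (Suc m))"
    using Suc.IH Suc.prems unfolding n_minus_k radical_coeff_Suc by simp
  have "(\<Prod>i = 0..<Suc k. real n - real i) = (\<Prod>i = 0..<k. real n - real i) * (real m + 1)"
    using \<open>real n - real k = real m + 1\<close> by simp
  moreover have "(\<Prod>i = 0..Suc k + 1. real n - real i - 1 / 2)
                 = (\<Prod>i = 0..k + 1. real n - real i - 1 / 2) * (real m - 3/2)"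
    using \<open>real n - real k = real m + 1\<close> by (simp add: algebra_simps)
  ultimately have "real (2 * n choose n) * (3 ^ (n + 1) * (\<Prod>i = 0..<Suc k. real n - real i)
              / (8 * (-3) ^ Suc k * (\<Prod>i = 0..Suc k + 1. real n - real i - 1 / 2)))
            = real (2 * n choose n) * (3 ^ (n + 1) * (\<Prod>i = 0..<k. real n - real i)
              / (8 * (-3) ^ k * (\<Prod>i = 0..k + 1. real n - real i - 1 / 2)))
              * ((real m + 1) / (-3 * (real m - 3/2)))"
    by (simp only: power_Suc times_divide_times_eq mult_ac)
  also have "\<dots> = (-4) ^ n / 2 * (radical_coeff m * 3 * (3/2 - real m) / real (Suc m))
                   * ((real m + 1) / (-3 * (real m - 3/2)))"
    by (simp only: IH)
  also have "\<dots> = (-4) ^ n / 2 * radical_coeff (n - Suc k)"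
    using of_nat_minus_halves_neq_0 [of m] unfolding m_def [symmetric]
    by (simp add: divide_simps) (simp add: algebra_simps)
  finally show ?case .
qed

definition radical_weighted_sum :: "nat \<Rightarrow> real" where
  "radical_weighted_sum n = (\<Sum>j = 0..n. real (n + 1 - j) * radical_coeff j)"

lemma radical_weighted_sum_Suc:
  "radical_weighted_sum (Suc n) = radical_weighted_sum n + (\<Sum>j = 0..Suc n. radical_coeff j)"
proof -
  have "(\<Sum>j = 0..n. real (Suc n + 1 - j) * radical_coeff j)
        = (\<Sum>j = 0..n. real (n + 1 - j) * radical_coeff j + radical_coeff j)"
    by (rule sum.cong) (auto simp: of_nat_diff algebra_simps)
  then show ?thesis
    by (simp add: radical_weighted_sum_def sum.distrib)
qed

lemma radical_weighted_sum_closed_form: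
  "radical_weighted_sum n
   = (8 * real n - 1) / 8 * (\<Sum>j = 0..n. radical_coeff j) + (real n + 1) * radical_coeff (Suc n) / 4"
proof (induction n)
  case 0
  then show ?case
    by (simp add: radical_weighted_sum_def radical_coeff_def)
next
  case (Suc n)
  have "radical_coeff (Suc (Suc n)) = radical_coeff (Suc n) * 3 * (1/2 - real n) / (real n + 2)"
    by (simp add: radical_coeff_Suc [of "Suc n"] algebra_simps)
  then show ?case
    unfolding radical_weighted_sum_Suc Suc.IH by (simp add: field_simps)
qed

lemma radical_coeff_Suc_eq_central_binomial:
  "(-4) ^ n * radical_coeff (Suc n) * (3 - 6 * real n) / 16
   = real (2 * n choose n) * 3 ^ (n + 3) / (32 * (real n + 1))"
proof -
  have "(-4) ^ n * radical_coeff (Suc n) * (3 - 6 * real n) / 16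
        = ((-4) ^ n * ((3/2) gchoose n)) * (3 ^ (n + 1) * (3/2 - real n) * (3 - 6 * real n) / (16 * (real n + 1)))"
    by (simp add: radical_coeff_def gbinomial_Suc_lower field_simps)
  also have "\<dots> = real (2 * n choose n) * 3 / (4 * (real n - 1/2) * (real n - 3/2))
                   * (3 ^ (n + 1) * (3/2 - real n) * (3 - 6 * real n) / (16 * (real n + 1)))"
    by (simp only: gchoose_three_halves)
  also have "\<dots> = real (2 * n choose n) * 3 ^ (n + 3) / (32 * (real n + 1))"
    using of_nat_minus_halves_neq_0 [of n]
    by (simp add: divide_simps) (simp add: algebra_simps power_add)
  finally show ?thesis .
qed

lemma first_closed_form_eq_radical_weighted_sum:
  "(1 - 8 * real n) / 2 * (-4) ^ n
   + real (2 * n choose n) *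
     (\<Sum>k = 0..n. 3 ^ (n + 1) * real (k + 1) * (\<Prod>i = 0..<k. real n - real i)
        / (8 * (-3) ^ k * (\<Prod>i = 0..k + 1. real n - real i - 1 / 2)))
   = (-4) ^ n / 2 * (1 - 8 * real n + radical_weighted_sum n)"
proof -
  have "real (2 * n choose n) *
          (\<Sum>k = 0..n. 3 ^ (n + 1) * real (k + 1) * (\<Prod>i = 0..<k. real n - real i)
             / (8 * (-3) ^ k * (\<Prod>i = 0..k + 1. real n - real i - 1 / 2)))
        = (\<Sum>k = 0..n. real (k + 1) * (real (2 * n choose n) * (3 ^ (n + 1) * (\<Prod>i = 0..<k. real n - real i)
             / (8 * (-3) ^ k * (\<Prod>i = 0..k + 1. real n - real i - 1 / 2)))))"
    by (simp add: sum_distrib_left mult_ac)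
  also have "\<dots> = (\<Sum>k = 0..n. real (k + 1) * ((-4) ^ n / 2 * radical_coeff (n - k)))"
    by (rule sum.cong [OF refl], subst central_binomial_quotient_eq_radical_coeff) simp_all
  also have "\<dots> = (-4) ^ n / 2 * (\<Sum>k = 0..n. real (k + 1) * radical_coeff (n - k))"
    by (simp add: sum_distrib_left mult_ac)
  also have "(\<Sum>k = 0..n. real (k + 1) * radical_coeff (n - k)) = radical_weighted_sum n"
    unfolding radical_weighted_sum_def
    by (subst sum.atLeastAtMost_rev) (rule sum.cong, auto simp: of_nat_diff)
  finally have sum_eq: "real (2 * n choose n) *
          (\<Sum>k = 0..n. 3 ^ (n + 1) * real (k + 1) * (\<Prod>i = 0..<k. real n - real i)
             / (8 * (-3) ^ k * (\<Prod>i = 0..k + 1. real n - real i - 1 / 2)))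
        = (-4) ^ n / 2 * radical_weighted_sum n" .
  show ?thesis
    unfolding sum_eq by (simp add: field_simps)
qed

lemma second_closed_form_eq_radical_weighted_sum:
  "(-4) ^ n * (1 - 8 * real n) / 16 *
     (8 - (\<Sum>k = 0..n + 1. (-3) ^ k / fact k * (\<Prod>i = 0..<k. real i - 3 / 2)))
   + real (2 * n choose n) * 3 ^ (n + 3) / (32 * (real n + 1))
   = (-4) ^ n / 2 * (1 - 8 * real n + radical_weighted_sum n)"
proof -
  have "(\<Sum>k = 0..n + 1. (-3) ^ k / fact k * (\<Prod>i = 0..<k. real i - 3 / 2))
        = (\<Sum>j = 0..n. radical_coeff j) + radical_coeff (Suc n)"
    by (simp add: radical_coeff_altdef)
  then show ?thesis
    unfolding radical_weighted_sum_closed_form radical_coeff_Suc_eq_central_binomial [symmetric]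
    by (simp add: field_simps)
qed

lemma of_real_gbinomial: "of_real (a gchoose k) = (of_real a gchoose k :: 'a :: {real_field, field_char_0})"
  by (simp add: gbinomial_prod_rev of_real_prod)

lemma fps_nth_geometric_power2:
  "fps_nth (Abs_fps (\<lambda>n. c ^ n) ^ 2) n = of_nat (n + 1) * (c :: 'a :: comm_semiring_1) ^ n"
proof -
  have "fps_nth (Abs_fps (\<lambda>n. c ^ n) ^ 2) n = (\<Sum>i = 0..n. c ^ i * c ^ (n - i))"
    by (simp add: power2_eq_square fps_mult_nth)
  also have "\<dots> = (\<Sum>i = 0..n. c ^ n)"
    by (rule sum.cong) (auto simp flip: power_add)
  finally show ?thesis
    by simp
qed

lemma inverse_1_plus_const_X:
  "inverse (1 + fps_const c * fps_X) = Abs_fps (\<lambda>n. (- c :: 'a :: field) ^ n)"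
proof (rule fps_inverse_unique)
  show "(1 + fps_const c * fps_X) * Abs_fps (\<lambda>n. (- c) ^ n) = 1"
  proof (rule fps_ext)
    fix n
    show "fps_nth ((1 + fps_const c * fps_X) * Abs_fps (\<lambda>n. (- c) ^ n)) n = fps_nth 1 n"
      by (cases n) (simp_all add: algebra_simps)
  qed
qed

lemma has_fps_expansion_inverse_1_plus_4z:
  "(\<lambda>z :: complex. inverse (1 + 4 * z)) has_fps_expansion Abs_fps (\<lambda>n. (-4) ^ n)"
proof -
  have "(\<lambda>z :: complex. inverse (1 + 4 * z)) has_fps_expansion inverse (1 + fps_const 4 * fps_X)"
    by (intro has_fps_expansion_inverse has_fps_expansion_add has_fps_expansion_cmult_left
          has_fps_expansion_fps_X has_fps_expansion_1) simp
  then show ?thesis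
    by (simp add: inverse_1_plus_const_X)
qed

lemma has_fps_expansion_three_halves_power:
  "(\<lambda>z :: complex. (1 - 12 * z) powr (3/2))
     has_fps_expansion Abs_fps (\<lambda>j. of_real (radical_coeff j) * (-4) ^ j)"
proof -
  have "((\<lambda>x. (1 + x) powr (3/2 :: complex)) \<circ> (\<lambda>z. -12 * z))
          has_fps_expansion fps_compose (fps_binomial (3/2)) (fps_const (-12) * fps_X)"
    by (intro has_fps_expansion_compose has_fps_expansion_binomial_complex
          has_fps_expansion_cmult_left has_fps_expansion_fps_X) simp
  moreover have "fps_compose (fps_binomial (3/2)) (fps_const (-12) * fps_X)
                 = Abs_fps (\<lambda>j. of_real (radical_coeff j) * (-4 :: complex) ^ j)"
  proof (rule fps_ext)
    fix j
    have "(-12 :: complex) ^ j = 3 ^ j * (-4) ^ j"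
      by (simp flip: power_mult_distrib)
    then show "fps_nth (fps_compose (fps_binomial (3/2)) (fps_const (-12) * fps_X)) j
               = fps_nth (Abs_fps (\<lambda>j. of_real (radical_coeff j) * (-4 :: complex) ^ j)) j"
      by (simp add: radical_coeff_def of_real_gbinomial)
  qed
  ultimately show ?thesis
    by (simp add: o_def)
qed

lemma powr_three_halves_squared:
  assumes "w \<noteq> 0"
  shows "(w powr (3/2)) ^ 2 = (w :: complex) ^ 3"
proof -
  have "(w powr (3/2)) ^ 2 = w powr (of_nat 2 * (3/2))"
    using assms by (rule powr_power)
  also have "of_nat 2 * (3/2 :: complex) = of_nat 3"
    by simp
  finally show ?thesis
    using assms by (simp add: powr_nat')
qed

text \<open>Near \<open>0\<close> the principal square root of \<open>(1 - 12 z)^3\<close> is the power \<open>3/2\<close>, because the latter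
  is a square root with value \<open>1\<close> at \<open>0\<close>, hence with positive real part nearby.\<close>
lemma eventually_csqrt_cube_eq_powr:
  "eventually (\<lambda>z. csqrt ((1 - 12 * z) ^ 3) = (1 - 12 * z) powr (3/2)) (nhds (0 :: complex))"
proof -
  let ?r = "\<lambda>z :: complex. (1 - 12 * z) powr (3/2)"
  have "continuous (at 0) ?r"
    by (rule has_fps_expansion_imp_continuous [OF has_fps_expansion_three_halves_power])
  then have "((\<lambda>z. Re (?r z)) \<longlongrightarrow> 1) (at 0)"
    by (intro tendsto_Re [where a = 1, simplified]) (simp add: continuous_at)
  then have "eventually (\<lambda>z. Re (?r z) > 0) (at 0)"
    by (rule order_tendstoD) simp
  then have "eventually (\<lambda>z. Re (?r z) > 0) (nhds 0)"
    by (simp add: eventually_nhds_conv_at)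
  moreover have "eventually (\<lambda>z. z \<in> ball 0 (1/12)) (nhds (0 :: complex))"
    by (intro eventually_nhds_in_open) auto
  ultimately show ?thesis
  proof eventually_elim
    case (elim z)
    then have "1 - 12 * z \<noteq> 0"
      by (auto simp: field_simps)
    then show ?case
      using elim by (intro csqrt_unique powr_three_halves_squared) auto
  qed
qed

lemma A220910_gf_has_fps_expansion:
  "A220910_gf has_fps_expansion
     fps_const (1/2) * ((1 + fps_const 36 * fps_X + Abs_fps (\<lambda>j. of_real (radical_coeff j) * (-4) ^ j))
                        * Abs_fps (\<lambda>n. (-4) ^ n) ^ 2)"
proof -
  have expansion: "(\<lambda>z :: complex. 1/2 * ((1 + 36 * z + (1 - 12 * z) powr (3/2)) * inverse (1 + 4 * z) ^ 2)) has_fps_expansion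
          fps_const (1/2) * ((1 + fps_const 36 * fps_X + Abs_fps (\<lambda>j. of_real (radical_coeff j) * (-4) ^ j))
                             * Abs_fps (\<lambda>n. (-4) ^ n) ^ 2)"
    by (intro has_fps_expansion_cmult_left has_fps_expansion_mult has_fps_expansion_add
          has_fps_expansion_power has_fps_expansion_fps_X has_fps_expansion_1
          has_fps_expansion_three_halves_power has_fps_expansion_inverse_1_plus_4z)
  have agree: "eventually (\<lambda>z. 1/2 * ((1 + 36 * z + (1 - 12 * z) powr (3/2)) * inverse (1 + 4 * z) ^ 2)
                                = A220910_gf z) (nhds 0)"
    using eventually_csqrt_cube_eq_powr by eventually_elim (simp add: A220910_gf_def field_simps)
  show ?thesis
    using expansion has_fps_expansion_cong [OF agree refl] by simp
qed

lemma A220910_eq_radical_weighted_sum: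
  "A220910 n = of_real ((-4) ^ n / 2 * (1 - 8 * real n + radical_weighted_sum n))"
proof -
  let ?R = "Abs_fps (\<lambda>j. of_real (radical_coeff j) * (-4 :: complex) ^ j)"
  let ?Q = "Abs_fps (\<lambda>n. (-4 :: complex) ^ n)"
  have linear: "fps_nth ((1 + fps_const 36 * fps_X) * ?Q ^ 2) n = of_real ((1 - 8 * real n) * (-4) ^ n)"
    by (cases n) (simp_all add: fps_nth_geometric_power2 algebra_simps)
  have "fps_nth (?R * ?Q ^ 2) n
        = (\<Sum>i = 0..n. of_real (radical_coeff i) * (-4) ^ i * (of_nat (n - i + 1) * (-4) ^ (n - i)))"
    by (simp add: fps_mult_nth fps_nth_geometric_power2)
  also have "\<dots> = (\<Sum>i = 0..n. of_real ((-4) ^ n * (real (n + 1 - i) * radical_coeff i)))"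
  proof (rule sum.cong [OF refl])
    fix i
    assume "i \<in> {0..n}"
    then have "(-4 :: complex) ^ i * (-4) ^ (n - i) = (-4) ^ n" and "n - i + 1 = n + 1 - i"
      by (simp_all flip: power_add)
    then show "of_real (radical_coeff i) * (-4) ^ i * (of_nat (n - i + 1) * (-4) ^ (n - i))
               = (of_real ((-4) ^ n * (real (n + 1 - i) * radical_coeff i)) :: complex)"
      by (simp add: algebra_simps)
  qed
  also have "\<dots> = of_real ((-4) ^ n * radical_weighted_sum n)"
    by (simp add: radical_weighted_sum_def sum_distrib_left)
  finally have radical: "fps_nth (?R * ?Q ^ 2) n = of_real ((-4) ^ n * radical_weighted_sum n)" .
  have "A220910 n = 1/2 * (fps_nth ((1 + fps_const 36 * fps_X) * ?Q ^ 2) n + fps_nth (?R * ?Q ^ 2) n)"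
    using fps_nth_fps_expansion [OF A220910_gf_has_fps_expansion, of n]
    by (simp add: A220910_def distrib_right)
  then show ?thesis
    unfolding linear radical by (simp add: field_simps)
qed

theorem mainTheorem8:
  fixes n :: nat
  shows "A220910 n = complex_of_real
           ((1 - 8 * real n) / 2 * (-4) ^ n
            + real (2 * n choose n) *
              (\<Sum>k = 0..n. 3 ^ (n + 1) * real (k + 1) * (\<Prod>i = 0..<k. real n - real i)
                 / (8 * (-3) ^ k * (\<Prod>i = 0..k + 1. real n - real i - 1 / 2))))
     \<and> A220910 n = complex_of_real
           ((-4) ^ n * (1 - 8 * real n) / 16 *
              (8 - (\<Sum>k = 0..n + 1. (-3) ^ k / fact k * (\<Prod>i = 0..<k. real i - 3 / 2)))
            + real (2 * n choose n) * 3 ^ (n + 3) / (32 * (real n + 1)))"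
  unfolding first_closed_form_eq_radical_weighted_sum second_closed_form_eq_radical_weighted_sum
  by (simp add: A220910_eq_radical_weighted_sum)

end
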